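(* Let $n\ge1$ and let $\lambda$ be a partition of $n$. The state-space complexity of $\mathcal{L}(\lambda)$ is at most $n+1$ and that of $\mathcal{D}(\lambda)$ is at most $n$ (both attained for $\lambda=(n)$). Moreover there is an absolute constant $C>0$ such that the state-space complexity of each of $\mathcal{L}(\lambda)$ and $\mathcal{D}(\lambda)$ is at least $C\sqrt{n}$.
   Context: A partition of $n$ is a non-increasing sequence $\lambda=(\lambda_1,\dots,\lambda_r)$ of positive integers with sum $n$; $()$ is the empty partition. For non-negative $i,j$, $\lambda[i,j]$ is $(\lambda_{i+1}-j,\dots,\lambda_r-j)$ with all non-positive entries removed. LCTR: positions $\mathcal{L}(\mu)$; if $\mu\neq()$ the two moves go to $\mathcal{L}(\mu[1,0])$ and $\mathcal{L}(\mu[0,1])$; $\mathcal{L}(())$ is terminal. Downright: positions $\mathcal{D}(\mu)$, $\mu$ nonempty with $s$ parts; a move to $\mathcal{D}(\mu[1,0])$ exists iff $s>1$, a move to $\mathcal{D}(\mu[0,1])$ exists iff $\mu_1>1$. The game tree of a position $p$ is the rooted tree with root $p$ in which each move gives a child, the root of the game tree of the resulting position. Two positions are called distinct if their game trees are not isomorphic as rooted trees. The state-space complexity of a game started at $p$ is the number of pairwise distinct positions reachable from $p$ by zero or more moves. *)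

theory Defs
  imports Complex_Main "HOL-Library.Multiset"
begin

definition is_partition :: "nat list \<Rightarrow> nat \<Rightarrow> bool" where
  "is_partition lam n \<longleftrightarrow> sorted_wrt (\<ge>) lam \<and> (\<forall>x\<in>set lam. 0 < x) \<and> sum_list lam = n"

text \<open>lam[i,j] = (lam_{i+1}-j, ..., lam_r - j) with non-positive entries removed.\<close>
definition shift :: "nat list \<Rightarrow> nat \<Rightarrow> nat \<Rightarrow> nat list" where
  "shift lam i j = filter (\<lambda>x. 0 < x) (map (\<lambda>x. x - j) (drop i lam))"

text \<open>Rooted unordered trees, up to isomorphism: children form a multiset.
  Two rooted trees are isomorphic iff their representations are equal.\<close>
datatype gtree = GNode "gtree multiset"

lemma shift_measure_10: "lam \<noteq> [] \<Longrightarrow> sum_list (shift lam 1 0) + length (shift lam 1 0) < sum_list lam + length lam"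
proof -
  have aux: "sum_list (filter (\<lambda>x. 0 < x) xs) + length (filter (\<lambda>x. 0 < (x::nat)) xs)
      \<le> sum_list xs + length xs" for xs :: "nat list"
    by (induction xs) auto
  assume "lam \<noteq> []"
  then obtain a xs where "lam = a # xs" by (cases lam) auto
  with aux[of xs] show ?thesis by (simp add: shift_def)
qed

lemma shift_measure_01: "lam \<noteq> [] \<Longrightarrow> sum_list (shift lam 0 1) + length (shift lam 0 1) < sum_list lam + length lam"
proof -
  have aux: "sum_list (filter (\<lambda>x. 0 < x) (map (\<lambda>x. x - 1) xs)) + length (filter (\<lambda>x. 0 < (x::nat)) (map (\<lambda>x. x - 1) xs))
      + length xs \<le> sum_list xs + length xs" for xs :: "nat list"
    by (induction xs) auto
  assume "lam \<noteq> []"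
  then obtain a xs where "lam = a # xs" by (cases lam) auto
  with aux[of xs] show ?thesis by (simp add: shift_def)
qed

function lctr_tree :: "nat list \<Rightarrow> gtree" where
  "lctr_tree lam = (if lam = [] then GNode {#}
     else GNode {# lctr_tree (shift lam 1 0), lctr_tree (shift lam 0 1) #})"
  by auto
termination
proof (relation "measure (\<lambda>lam. sum_list lam + length lam)")
  show "wf (measure (\<lambda>lam. sum_list lam + length lam))" by simp
qed (use shift_measure_10 shift_measure_01 in \<open>simp_all only: in_measure\<close>, (metis list.size(3) not_less0 shift_measure_10 shift_measure_01)+)

function dr_tree :: "nat list \<Rightarrow> gtree" where
  "dr_tree lam = GNode (
     (if 1 < length lam then {# dr_tree (shift lam 1 0) #} else {#}) +
     (if lam \<noteq> [] \<and> 1 < hd lam then {# dr_tree (shift lam 0 1) #} else {#}))"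
  by auto
termination
proof (relation "measure (\<lambda>lam. sum_list lam + length lam)")
  show "wf (measure (\<lambda>lam. sum_list lam + length lam))" by simp
qed (use shift_measure_10 shift_measure_01 in \<open>simp_all only: in_measure\<close>, (metis list.size(3) not_less0 shift_measure_10 shift_measure_01)+)

inductive_set lctr_reach :: "nat list \<Rightarrow> nat list set" for lam where
  refl: "lam \<in> lctr_reach lam"
| mv1: "mu \<in> lctr_reach lam \<Longrightarrow> mu \<noteq> [] \<Longrightarrow> shift mu 1 0 \<in> lctr_reach lam"
| mv2: "mu \<in> lctr_reach lam \<Longrightarrow> mu \<noteq> [] \<Longrightarrow> shift mu 0 1 \<in> lctr_reach lam"

inductive_set dr_reach :: "nat list \<Rightarrow> nat list set" for lam where
  refl: "lam \<in> dr_reach lam"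
| mv1: "mu \<in> dr_reach lam \<Longrightarrow> 1 < length mu \<Longrightarrow> shift mu 1 0 \<in> dr_reach lam"
| mv2: "mu \<in> dr_reach lam \<Longrightarrow> mu \<noteq> [] \<Longrightarrow> 1 < hd mu \<Longrightarrow> shift mu 0 1 \<in> dr_reach lam"

text \<open>State-space complexity: number of pairwise distinct (non-isomorphic game trees) reachable positions.\<close>
definition lctr_ssc :: "nat list \<Rightarrow> nat" where
  "lctr_ssc lam = card (lctr_tree ` lctr_reach lam)"

definition dr_ssc :: "nat list \<Rightarrow> nat" where
  "dr_ssc lam = card (dr_tree ` dr_reach lam)"

end

theory Submission
  imports Defs
begin

text \<open>Every position reachable from \<open>\<lambda>\<close> is a shifted partition \<open>\<lambda>[i,j]\<close>, and a
  nonempty one determines a cell \<open>(i,j)\<close> of the Young diagram of \<open>\<lambda>\<close>; since there are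
  \<open>n\<close> cells, at most \<open>n\<close> nonempty positions (plus the empty one for LCTR) are reachable.
  Conversely, along the first row \<open>\<lambda>[0,j]\<close> and the first column \<open>\<lambda>[k,0]\<close> every move
  passes to a proper subtree of the game tree, so the game trees met along such a path
  are pairwise distinct.  This gives at least \<open>max(\<lambda>\<^sub>1, r)\<close> distinct positions, and
  \<open>n \<le> r \<lambda>\<^sub>1 \<le> max(\<lambda>\<^sub>1, r)\<^sup>2\<close>.\<close>

lemma shift_pos: "x \<in> set (shift xs i j) \<Longrightarrow> 0 < x"
  by (simp add: shift_def)

lemma shift_0_of_pos: "\<forall>x\<in>set xs. 0 < x \<Longrightarrow> shift xs i 0 = drop i xs"
  unfolding shift_def by (auto simp: filter_id_conv dest: in_set_dropD)

lemma shift_shift_0_1: "shift (shift xs i j) 0 1 = shift xs i (Suc j)"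
proof -
  have "filter (\<lambda>x. 0 < x) (map (\<lambda>x. x - 1) (filter (\<lambda>x. 0 < x) (map (\<lambda>x. x - j) zs)))
     = filter (\<lambda>x. 0 < x) (map (\<lambda>x. x - Suc j) zs)" for zs :: "nat list"
    by (induction zs) auto
  thus ?thesis by (simp add: shift_def)
qed

text \<open>Once the first entry of a non-increasing list drops to zero, so do all the others.\<close>
lemma drop_1_filter_pos_map_minus:
  assumes "sorted_wrt (\<ge>) (ys :: nat list)"
  shows "drop 1 (filter (\<lambda>x. 0 < x) (map (\<lambda>x. x - j) ys))
       = filter (\<lambda>x. 0 < x) (map (\<lambda>x. x - j) (drop 1 ys))"
proof (cases ys)
  case (Cons a t)
  show ?thesis
  proof (cases "j < a")
    case False
    then have "\<forall>y\<in>set t. y \<le> j" using assms Cons by auto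
    then show ?thesis using Cons False by (simp add: filter_empty_conv)
  qed (use Cons in simp)
qed simp

lemma shift_shift_1_0:
  assumes "sorted_wrt (\<ge>) (xs :: nat list)"
  shows "shift (shift xs i j) 1 0 = shift xs (Suc i) j"
proof -
  have "shift (shift xs i j) 1 0 = drop 1 (shift xs i j)"
    by (rule shift_0_of_pos) (simp add: shift_pos)
  also have "\<dots> = shift xs (Suc i) j"
    using drop_1_filter_pos_map_minus[of "drop i xs" j] assms
    by (simp add: shift_def sorted_wrt_drop)
  finally show ?thesis .
qed

lemma hd_shift_0:
  "xs \<noteq> [] \<Longrightarrow> j < hd xs \<Longrightarrow> shift xs 0 j \<noteq> [] \<and> hd (shift xs 0 j) = hd xs - j"
  by (cases xs) (auto simp: shift_def)

definition young_cells :: "nat list \<Rightarrow> (nat \<times> nat) set" where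
  "young_cells xs = {(i, j). i < length xs \<and> j < xs ! i}"

lemma young_cells_eq_Sigma: "young_cells xs = Sigma {..<length xs} (\<lambda>i. {..<xs ! i})"
  by (auto simp: young_cells_def)

lemma finite_young_cells: "finite (young_cells xs)"
  by (simp add: young_cells_eq_Sigma)

lemma card_young_cells: "card (young_cells xs) = sum_list xs"
  by (simp add: young_cells_eq_Sigma sum_list_sum_nth atLeast0LessThan)

lemma shift_nonempty_imp_young_cell:
  assumes "sorted_wrt (\<ge>) (xs :: nat list)" "shift xs i j \<noteq> []"
  shows "(i, j) \<in> young_cells xs"
proof -
  obtain x where x: "x \<in> set (drop i xs)" "j < x"
    using assms(2) by (auto simp: shift_def filter_empty_conv)
  then obtain k where k: "k < length xs - i" "x = xs ! (i + k)"
    by (auto simp: in_set_conv_nth)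
  have "xs ! (i + k) \<le> xs ! i"
    using assms(1) k by (cases k) (auto simp: sorted_wrt_iff_nth_less)
  then show ?thesis using k x by (auto simp: young_cells_def)
qed

lemma dr_reach_subset_lctr_reach: "dr_reach lam \<subseteq> lctr_reach lam"
proof
  show "mu \<in> lctr_reach lam" if "mu \<in> dr_reach lam" for mu
    using that by induction (auto intro: lctr_reach.intros simp del: One_nat_def)
qed

lemma lctr_reach_shift:
  assumes "sorted_wrt (\<ge>) lam" "\<forall>x\<in>set lam. 0 < x" "mu \<in> lctr_reach lam"
  shows "\<exists>i j. mu = shift lam i j"
  using assms(3)
proof induction
  case refl
  show ?case using shift_0_of_pos[OF assms(2), of 0] by (metis drop_0)
qed (use shift_shift_1_0[OF assms(1)] shift_shift_0_1 in metis)+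

lemma lctr_reach_subset_young_cells:
  assumes "sorted_wrt (\<ge>) lam" "\<forall>x\<in>set lam. 0 < x"
  shows "lctr_reach lam \<subseteq> insert [] ((\<lambda>(i, j). shift lam i j) ` young_cells lam)"
  using lctr_reach_shift[OF assms] shift_nonempty_imp_young_cell[OF assms(1)] by fast

lemma dr_reach_nonempty:
  assumes "sorted_wrt (\<ge>) lam" "\<forall>x\<in>set lam. 0 < x" "lam \<noteq> []" "mu \<in> dr_reach lam"
  shows "mu \<noteq> []"
  using assms(4)
proof induction
  case (mv1 mu)
  then obtain i j where "mu = shift lam i j"
    using lctr_reach_shift[OF assms(1,2)] dr_reach_subset_lctr_reach by blast
  then have "shift mu 1 0 = drop 1 mu" by (simp add: shift_0_of_pos shift_pos)
  then show ?case using mv1 by simp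
qed (use assms(3) hd_shift_0[of _ 1] in auto)

lemma dr_reach_subset_young_cells:
  assumes "sorted_wrt (\<ge>) lam" "\<forall>x\<in>set lam. 0 < x" "lam \<noteq> []"
  shows "dr_reach lam \<subseteq> (\<lambda>(i, j). shift lam i j) ` young_cells lam"
  using lctr_reach_subset_young_cells[OF assms(1,2)] dr_reach_subset_lctr_reach
    dr_reach_nonempty[OF assms] by blast

lemma partitionD:
  assumes "is_partition lam n"
  shows "sorted_wrt (\<ge>) lam" "\<forall>x\<in>set lam. 0 < x" "sum_list lam = n"
  using assms by (auto simp: is_partition_def)

lemma
  assumes "is_partition lam n"
  shows finite_lctr_reach: "finite (lctr_reach lam)"
    and lctr_ssc_le: "lctr_ssc lam \<le> n + 1"
proof -
  let ?P = "insert [] ((\<lambda>(i, j). shift lam i j) ` young_cells lam)"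
  have sub: "lctr_reach lam \<subseteq> ?P"
    using lctr_reach_subset_young_cells partitionD[OF assms] by blast
  have fin: "finite ?P" by (simp add: finite_young_cells)
  then show "finite (lctr_reach lam)" using sub by (rule finite_subset[rotated])
  then have "lctr_ssc lam \<le> card (lctr_reach lam)"
    unfolding lctr_ssc_def by (rule card_image_le)
  also have "\<dots> \<le> card ?P" by (rule card_mono[OF fin sub])
  also have "\<dots> \<le> Suc (card ((\<lambda>(i, j). shift lam i j) ` young_cells lam))"
    by (rule card_insert_le_m1) simp_all
  also have "\<dots> \<le> Suc (card (young_cells lam))"
    by (simp add: card_image_le finite_young_cells)
  finally show "lctr_ssc lam \<le> n + 1"
    using partitionD(3)[OF assms] by (simp add: card_young_cells)
qed

lemma
  assumes "is_partition lam n" "1 \<le> n"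
  shows finite_dr_reach: "finite (dr_reach lam)"
    and dr_ssc_le: "dr_ssc lam \<le> n"
proof -
  let ?P = "(\<lambda>(i, j). shift lam i j) ` young_cells lam"
  have "lam \<noteq> []" using assms partitionD(3) by fastforce
  then have sub: "dr_reach lam \<subseteq> ?P"
    using dr_reach_subset_young_cells partitionD[OF assms(1)] by blast
  have fin: "finite ?P" by (simp add: finite_young_cells)
  then show "finite (dr_reach lam)" using sub by (rule finite_subset[rotated])
  then have "dr_ssc lam \<le> card (dr_reach lam)"
    unfolding dr_ssc_def by (rule card_image_le)
  also have "\<dots> \<le> card ?P" by (rule card_mono[OF fin sub])
  also have "\<dots> \<le> card (young_cells lam)" by (simp add: card_image_le finite_young_cells)
  finally show "dr_ssc lam \<le> n"
    using partitionD(3)[OF assms(1)] by (simp add: card_young_cells)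
qed

lemma lctr_tree_size_shift:
  assumes "mu \<noteq> []"
  shows "size (lctr_tree (shift mu 1 0)) < size (lctr_tree mu)"
    and "size (lctr_tree (shift mu 0 1)) < size (lctr_tree mu)"
  using lctr_tree.simps[of mu] assms by (simp_all del: lctr_tree.simps)

lemma dr_tree_size_shift_1_0:
  assumes "1 < length mu"
  shows "size (dr_tree (shift mu 1 0)) < size (dr_tree mu)"
proof -
  obtain X where "dr_tree mu = GNode ({# dr_tree (shift mu 1 0) #} + X)"
    using dr_tree.simps[of mu] assms by (simp del: dr_tree.simps)
  then show ?thesis by (simp add: size_multiset_union)
qed

lemma dr_tree_size_shift_0_1:
  assumes "mu \<noteq> []" "1 < hd mu"
  shows "size (dr_tree (shift mu 0 1)) < size (dr_tree mu)"
proof -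
  obtain X where "dr_tree mu = GNode (X + {# dr_tree (shift mu 0 1) #})"
    using dr_tree.simps[of mu] assms by (simp del: dr_tree.simps)
  then show ?thesis by (simp add: size_multiset_union)
qed

lemma inj_on_descending_chain:
  fixes g :: "nat \<Rightarrow> 'a :: linorder"
  assumes "\<And>k. k < L \<Longrightarrow> g (Suc k) < g k"
  shows "inj_on g {..L}"
proof -
  have less: "g m < g k" if "k < m" "m \<le> L" for k m
    using that by (induction k m rule: less_Suc_induct) (use assms in auto)
  show ?thesis
  proof (rule inj_onI)
    fix k m assume "k \<in> {..L}" "m \<in> {..L}" "g k = g m"
    then show "k = m" using less[of k m] less[of m k] by (cases k m rule: linorder_cases) auto
  qed
qed

lemma card_image_ge_descending_chain:
  fixes T :: "'a \<Rightarrow> gtree"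
  assumes "finite R" "\<And>k. k \<le> L \<Longrightarrow> p k \<in> R"
    and "\<And>k. k < L \<Longrightarrow> size (T (p (Suc k))) < size (T (p k))"
  shows "Suc L \<le> card (T ` R)"
proof -
  have "inj_on (\<lambda>k. size (T (p k))) {..L}"
    by (rule inj_on_descending_chain) (rule assms(3))
  then have "inj_on (\<lambda>k. T (p k)) {..L}" using inj_on_imageI2[of size] by (simp add: comp_def)
  then have "card {..L} \<le> card (T ` R)"
    by (rule card_inj_on_le) (use assms(1,2) in auto)
  then show ?thesis by simp
qed

lemma drop_Suc_eq_shift_1_0: "\<forall>x\<in>set lam. 0 < x \<Longrightarrow> drop (Suc k) lam = shift (drop k lam) 1 0"
  by (simp add: shift_0_of_pos in_set_dropD)

lemma lctr_reach_first_column: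
  assumes "\<forall>x\<in>set lam. 0 < x" "k \<le> length lam"
  shows "drop k lam \<in> lctr_reach lam"
  using assms(2)
proof (induction k)
  case (Suc k)
  then show ?case using lctr_reach.mv1[of "drop k lam"] drop_Suc_eq_shift_1_0[OF assms(1)] by simp
qed (simp add: lctr_reach.refl)

lemma lctr_reach_first_row:
  assumes "\<forall>x\<in>set lam. 0 < x" "lam \<noteq> []" "j \<le> hd lam"
  shows "shift lam 0 j \<in> lctr_reach lam"
  using assms(3)
proof (induction j)
  case 0
  show ?case using lctr_reach.refl shift_0_of_pos[OF assms(1), of 0] by simp
next
  case (Suc j)
  then show ?case
    using lctr_reach.mv2[of "shift lam 0 j"] hd_shift_0[OF assms(2), of j] shift_shift_0_1 by auto
qed

lemma dr_reach_first_column: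
  assumes "\<forall>x\<in>set lam. 0 < x" "k < length lam"
  shows "drop k lam \<in> dr_reach lam"
  using assms(2)
proof (induction k)
  case (Suc k)
  then show ?case using dr_reach.mv1[of "drop k lam"] drop_Suc_eq_shift_1_0[OF assms(1)] by simp
qed (simp add: dr_reach.refl)

lemma dr_reach_first_row:
  assumes "\<forall>x\<in>set lam. 0 < x" "lam \<noteq> []" "j < hd lam"
  shows "shift lam 0 j \<in> dr_reach lam"
  using assms(3)
proof (induction j)
  case 0
  show ?case using dr_reach.refl shift_0_of_pos[OF assms(1), of 0] by simp
next
  case (Suc j)
  then show ?case
    using dr_reach.mv2[of "shift lam 0 j"] hd_shift_0[OF assms(2), of j] shift_shift_0_1 by auto
qed

lemma lctr_ssc_gt:
  assumes "is_partition lam n" "lam \<noteq> []"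
  shows "length lam < lctr_ssc lam" and "hd lam < lctr_ssc lam"
proof -
  note pos = partitionD(2)[OF assms(1)]
  have fin: "finite (lctr_reach lam)" by (rule finite_lctr_reach[OF assms(1)])
  have "Suc (length lam) \<le> card (lctr_tree ` lctr_reach lam)"
  proof (rule card_image_ge_descending_chain[OF fin, where p = "\<lambda>k. drop k lam"])
    show "drop k lam \<in> lctr_reach lam" if "k \<le> length lam" for k
      using lctr_reach_first_column[OF pos that] .
    show "size (lctr_tree (drop (Suc k) lam)) < size (lctr_tree (drop k lam))"
      if "k < length lam" for k
      using lctr_tree_size_shift(1)[of "drop k lam"] that
      by (simp add: drop_Suc_eq_shift_1_0[OF pos] del: drop_Suc lctr_tree.simps)
  qed
  then show "length lam < lctr_ssc lam" by (simp add: lctr_ssc_def)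
  have "Suc (hd lam) \<le> card (lctr_tree ` lctr_reach lam)"
  proof (rule card_image_ge_descending_chain[OF fin, where p = "\<lambda>j. shift lam 0 j"])
    show "shift lam 0 j \<in> lctr_reach lam" if "j \<le> hd lam" for j
      using lctr_reach_first_row[OF pos assms(2) that] .
    show "size (lctr_tree (shift lam 0 (Suc j))) < size (lctr_tree (shift lam 0 j))"
      if "j < hd lam" for j
      unfolding shift_shift_0_1[symmetric]
      using lctr_tree_size_shift(2) hd_shift_0[OF assms(2) that] by blast
  qed
  then show "hd lam < lctr_ssc lam" by (simp add: lctr_ssc_def)
qed

lemma dr_ssc_ge:
  assumes "is_partition lam n" "lam \<noteq> []"
  shows "length lam \<le> dr_ssc lam" and "hd lam \<le> dr_ssc lam"
proof -
  note pos = partitionD(2)[OF assms(1)]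
  have "1 \<le> n" using assms pos partitionD(3)[OF assms(1)] by (cases lam) auto
  then have fin: "finite (dr_reach lam)" by (rule finite_dr_reach[OF assms(1)])
  have "Suc (length lam - 1) \<le> card (dr_tree ` dr_reach lam)"
  proof (rule card_image_ge_descending_chain[OF fin, where p = "\<lambda>k. drop k lam"])
    show "drop k lam \<in> dr_reach lam" if "k \<le> length lam - 1" for k
      using dr_reach_first_column[OF pos] that assms(2) by (cases lam) auto
    show "size (dr_tree (drop (Suc k) lam)) < size (dr_tree (drop k lam))"
      if "k < length lam - 1" for k
      using dr_tree_size_shift_1_0[of "drop k lam"] that
      by (simp add: drop_Suc_eq_shift_1_0[OF pos] del: drop_Suc dr_tree.simps)
  qed
  then show "length lam \<le> dr_ssc lam" using assms(2) by (simp add: dr_ssc_def)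
  have "Suc (hd lam - 1) \<le> card (dr_tree ` dr_reach lam)"
  proof (rule card_image_ge_descending_chain[OF fin, where p = "\<lambda>j. shift lam 0 j"])
    show "shift lam 0 j \<in> dr_reach lam" if "j \<le> hd lam - 1" for j
      using dr_reach_first_row[OF pos assms(2)] that pos assms(2) by (cases lam) auto
    show "size (dr_tree (shift lam 0 (Suc j))) < size (dr_tree (shift lam 0 j))"
      if "j < hd lam - 1" for j
      unfolding shift_shift_0_1[symmetric]
      using hd_shift_0[OF assms(2), of j] that by (intro dr_tree_size_shift_0_1) auto
  qed
  then show "hd lam \<le> dr_ssc lam" by (simp add: dr_ssc_def)
qed

lemma sum_list_le_length_mult_hd:
  assumes "sorted_wrt (\<ge>) (xs :: nat list)"
  shows "sum_list xs \<le> length xs * hd xs"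
proof -
  have "\<forall>x\<in>set xs. x \<le> hd xs" using assms by (cases xs) auto
  then have "sum_list (map id xs) \<le> sum_list (map (\<lambda>_. hd xs) xs)"
    by (intro sum_list_mono) simp
  then show ?thesis by (simp add: sum_list_triv)
qed

lemma sqrt_le_max_length_hd:
  assumes "is_partition lam n"
  shows "sqrt (real n) \<le> real (max (length lam) (hd lam))"
proof -
  let ?m = "max (length lam) (hd lam)"
  have "n \<le> length lam * hd lam"
    using sum_list_le_length_mult_hd partitionD[OF assms] by metis
  also have "\<dots> \<le> ?m * ?m" by (intro mult_mono) auto
  finally have "real n \<le> real ?m ^ 2" by (simp add: power2_eq_square flip: of_nat_mult)
  then show ?thesis by (simp add: real_le_lsqrt)
qed

theorem mainTheorem20:
  shows "(\<forall>n lam. 1 \<le> n \<longrightarrow> is_partition lam n \<longrightarrow>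
            lctr_ssc lam \<le> n + 1 \<and> dr_ssc lam \<le> n)
       \<and> (\<forall>n. 1 \<le> n \<longrightarrow> lctr_ssc [n] = n + 1 \<and> dr_ssc [n] = n)
       \<and> (\<exists>C::real. C > 0 \<and> (\<forall>n lam. 1 \<le> n \<longrightarrow> is_partition lam n \<longrightarrow>
            C * sqrt (real n) \<le> real (lctr_ssc lam) \<and> C * sqrt (real n) \<le> real (dr_ssc lam)))"
proof (intro conjI allI impI exI[of _ 1])
  fix n lam assume n: "1 \<le> n" and lam: "is_partition lam n"
  show "lctr_ssc lam \<le> n + 1" "dr_ssc lam \<le> n"
    using lctr_ssc_le[OF lam] dr_ssc_le[OF lam n] .
  have "lam \<noteq> []" using n partitionD(3)[OF lam] by auto
  then have "max (length lam) (hd lam) \<le> lctr_ssc lam" "max (length lam) (hd lam) \<le> dr_ssc lam"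
    using lctr_ssc_gt[OF lam] dr_ssc_ge[OF lam] by auto
  then show "1 * sqrt (real n) \<le> real (lctr_ssc lam)" "1 * sqrt (real n) \<le> real (dr_ssc lam)"
    using sqrt_le_max_length_hd[OF lam] by (simp_all add: order_trans)
next
  fix n :: nat assume n: "1 \<le> n"
  then have row: "is_partition [n] n" by (simp add: is_partition_def)
  show "lctr_ssc [n] = n + 1" using lctr_ssc_le[OF row] lctr_ssc_gt(2)[OF row] by simp
  show "dr_ssc [n] = n" using dr_ssc_le[OF row n] dr_ssc_ge(2)[OF row] by simp
qed simp

end
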